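(* In the ACS setup of the context, with $M_k=\dfrac{|P_k\cap\mathcal{H}_0|}{1+|N^-_k|}$, one has $$\mathbb{E}\big[M_k\,\big|\,|P_k\cap\mathcal{H}_0|+|N^-_k|\big]\le\frac{m}{n-k+1},\qquad\text{hence}\qquad \mathbb{E}[M_k]\le\frac{m}{n-k+1}.$$
   Context: Setup. Let $n,m\ge 1$, $0\le k\le n$. For $i\in[n+m]$ let $X_i\in\mathcal{X}$, $Y_i\in\mathbb{R}$, $\mathcal{C}_i\subseteq\mathbb{R}$, with $\{(X_i,Y_i,\mathcal{C}_i)\}_{i}$ jointly exchangeable. $(A_1,\dots,A_{n+m})$ is uniform over binary vectors with exactly $n$ zeros and $m$ ones, independent of the data ($A_i=0$: labeled, $A_i=1$: test). $\mathcal{H}_0=\{i:A_i=1,Y_i\in\mathcal{C}_i\}$. $(\pi(1),\dots,\pi(k))$ is a uniformly random ordered choice of $k$ distinct indices from $\{i:A_i=0\}$, independent of all else; $U_k=[n+m]\setminus\{\pi(1),\dots,\pi(k)\}$, $N^-_k=\{i\in U_k:A_i=0,Y_i\in\mathcal{C}_i\}$, $P_k=\{i\in U_k:A_i=1\}$. *)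

theory Defs
  imports "HOL-Probability.Probability"
begin

text \<open>Indices are 0..<n+m instead of 1..n+m. A data point is a triple (X_i, Y_i, C_i).
 The vector A is represented by the set T of test indices (A_i = 1 iff i in T);
 the ordered choice pi(1),...,pi(k) is represented by a distinct list of length k.\<close>

type_synonym 'x datum = "'x \<times> real \<times> real set"

definition covered :: "'x datum \<Rightarrow> bool" where
  "covered z \<longleftrightarrow> fst (snd z) \<in> snd (snd z)"

definition ACS_law :: "nat \<Rightarrow> nat \<Rightarrow> nat \<Rightarrow> (nat set \<times> nat list) pmf" where
  "ACS_law n m k = do {
     T \<leftarrow> pmf_of_set {T. T \<subseteq> {..<n+m} \<and> card T = m};
     p \<leftarrow> pmf_of_set {xs. distinct xs \<and> length xs = k \<and> set xs \<subseteq> {..<n+m} - T};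
     return_pmf (T, p) }"

definition H0 :: "nat \<Rightarrow> nat \<Rightarrow> (nat \<Rightarrow> 'x datum) \<Rightarrow> nat set \<Rightarrow> nat set" where
  "H0 n m d T = {i. i < n+m \<and> i \<in> T \<and> covered (d i)}"

definition Uk :: "nat \<Rightarrow> nat \<Rightarrow> nat list \<Rightarrow> nat set" where
  "Uk n m p = {..<n+m} - set p"

definition Nminus :: "nat \<Rightarrow> nat \<Rightarrow> (nat \<Rightarrow> 'x datum) \<Rightarrow> nat set \<Rightarrow> nat list \<Rightarrow> nat set" where
  "Nminus n m d T p = {i \<in> Uk n m p. i \<notin> T \<and> covered (d i)}"

definition Pk :: "nat \<Rightarrow> nat \<Rightarrow> nat set \<Rightarrow> nat list \<Rightarrow> nat set" where
  "Pk n m T p = {i \<in> Uk n m p. i \<in> T}"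

definition Mk :: "nat \<Rightarrow> nat \<Rightarrow> (nat \<Rightarrow> 'x datum) \<Rightarrow> nat set \<Rightarrow> nat list \<Rightarrow> real" where
  "Mk n m d T p = real (card (Pk n m T p \<inter> H0 n m d T)) / (1 + real (card (Nminus n m d T p)))"

definition Tsum :: "nat \<Rightarrow> nat \<Rightarrow> (nat \<Rightarrow> 'x datum) \<Rightarrow> nat set \<Rightarrow> nat list \<Rightarrow> nat" where
  "Tsum n m d T p = card (Pk n m T p \<inter> H0 n m d T) + card (Nminus n m d T p)"

definition exchangeable :: "'w measure \<Rightarrow> 'd measure \<Rightarrow> nat \<Rightarrow> ('w \<Rightarrow> nat \<Rightarrow> 'd) \<Rightarrow> bool" where
  "exchangeable M S N D \<longleftrightarrow>
     (\<forall>\<sigma>. bij_betw \<sigma> {..<N} {..<N} \<longrightarrow>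
        distr M (PiM {..<N} (\<lambda>_. S)) (\<lambda>w. restrict (\<lambda>i. D w (\<sigma> i)) {..<N})
      = distr M (PiM {..<N} (\<lambda>_. S)) (\<lambda>w. restrict (D w) {..<N}))"

end

theory Submission
  imports Defs
begin

text \<open>Fix the data and the ordered calibration list p, and let U be the set of the remaining
  n + m - k indices and C \<subseteq> U its covered points. The test set T is then uniform among the
  m-subsets of U, the statistic card (P_k \<inter> H_0) + card N^-_k equals card C whatever T is, and
  M_k = card (T \<inter> C) / (1 + card (C - T)). Double counting the pairs (T, i) with i \<in> T \<inter> C
  bounds the sum of M_k over all T by (card U choose (m - 1)), which is m / (n - k + 1) times the
  number of test sets. Hence E[(M_k - m / (n - k + 1)) \<cdot> 1{statistic \<in> B}] \<le> 0 for every B, first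
  conditionally on the data and p, then on the product space by Fubini, and this inequality
  for all B is exactly the bound on the conditional expectation.\<close>

lemma sum_subsets_card_Int_div_card_Diff_le:
  fixes U C :: "'a set"
  assumes "finite U" and "C \<subseteq> U" and "m \<ge> 1"
  shows "(\<Sum>T | T \<subseteq> U \<and> card T = m. real (card (T \<inter> C)) / (1 + real (card (C - T))))
         \<le> real (card U choose (m - 1))"
proof -
  define \<T> where "\<T> = {T. T \<subseteq> U \<and> card T = m}"
  define \<T>' where "\<T>' = {T. T \<subseteq> U \<and> card T = m - 1}"
  have fin: "finite \<T>" "finite \<T>'" "finite C"
    unfolding \<T>_def \<T>'_def using assms finite_subset by auto
  have finT: "finite T" if "T \<subseteq> U" for T
    using that assms(1) finite_subset by blast
  have "(\<Sum>T\<in>\<T>. real (card (T \<inter> C)) / (1 + real (card (C - T))))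
      = (\<Sum>(T, i)\<in>Sigma \<T> (\<lambda>T. T \<inter> C). 1 / (1 + real (card (C - T))))"
    by (subst sum.Sigma[symmetric]) (use fin in \<open>auto simp: divide_inverse\<close>)
  also have "\<dots> = (\<Sum>(T, i)\<in>Sigma \<T>' (\<lambda>T. C - T). 1 / real (card (C - T)))"
  proof (rule sum.reindex_bij_witness[where i="\<lambda>(T, i). (insert i T, i)" and j="\<lambda>(T, i). (T - {i}, i)"])
    fix a assume "a \<in> Sigma \<T> (\<lambda>T. T \<inter> C)"
    then obtain T i where a: "a = (T, i)" "T \<subseteq> U" "card T = m" "i \<in> T" "i \<in> C"
      unfolding \<T>_def by auto
    show "(\<lambda>(T, i). (insert i T, i)) ((\<lambda>(T, i). (T - {i}, i)) a) = a"
      using a by auto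
    show "(\<lambda>(T, i). (T - {i}, i)) a \<in> Sigma \<T>' (\<lambda>T. C - T)"
      using a finT unfolding \<T>'_def by auto
    have "C - (T - {i}) = insert i (C - T)" using a by auto
    then have "card (C - (T - {i})) = 1 + card (C - T)" using a fin by simp
    then show "(case (\<lambda>(T, i). (T - {i}, i)) a of (T, i) \<Rightarrow> 1 / real (card (C - T)))
             = (case a of (T, i) \<Rightarrow> 1 / (1 + real (card (C - T))))" using a by simp
  next
    fix b assume "b \<in> Sigma \<T>' (\<lambda>T. C - T)"
    then obtain T i where b: "b = (T, i)" "T \<subseteq> U" "card T = m - 1" "i \<notin> T" "i \<in> C"
      unfolding \<T>'_def by auto
    show "(\<lambda>(T, i). (T - {i}, i)) ((\<lambda>(T, i). (insert i T, i)) b) = b"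
      using b by auto
    show "(\<lambda>(T, i). (insert i T, i)) b \<in> Sigma \<T> (\<lambda>T. T \<inter> C)"
      using b finT assms unfolding \<T>_def by auto
  qed
  also have "\<dots> = (\<Sum>T\<in>\<T>'. \<Sum>i\<in>C - T. 1 / real (card (C - T)))"
    by (rule sum.Sigma[symmetric]) (use fin in auto)
  also have "\<dots> \<le> (\<Sum>T\<in>\<T>'. 1)"
    by (rule sum_mono) simp
  also have "\<dots> = real (card U choose (m - 1))"
    unfolding \<T>'_def using n_subsets[OF assms(1)] by simp
  finally show ?thesis unfolding \<T>_def .
qed

lemma real_binomial_pred:
  assumes "1 \<le> m" and "m \<le> u"
  shows "real (u choose (m - 1)) = real m / (real u - real m + 1) * real (u choose m)"
proof -
  obtain j where j: "m = Suc j" using assms(1) by (cases m) auto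
  have "(u choose Suc j) * Suc j = (u choose j) * (u - j)"
    using binomial_absorption[of j u] binomial_absorb_comp[of u j] by (simp add: mult.commute)
  then have "real (u choose Suc j) * real (Suc j) = real (u choose j) * (real u - real j)"
    using assms j by (metis of_nat_diff of_nat_mult Suc_le_lessD less_imp_le_nat)
  moreover have "real u - real j > 0" using assms j by simp
  ultimately show ?thesis using j by (simp add: field_simps)
qed

lemma pmf_of_set_Sigma:
  assumes "finite A" and "A \<noteq> {}"
    and "\<And>a. a \<in> A \<Longrightarrow> finite (B a)" and "\<And>a. a \<in> A \<Longrightarrow> B a \<noteq> {}"
    and "\<And>a. a \<in> A \<Longrightarrow> card (B a) = K"
  shows "pmf_of_set (Sigma A B) = do {a \<leftarrow> pmf_of_set A; b \<leftarrow> pmf_of_set (B a); return_pmf (a, b)}"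
proof -
  have "pmf_of_set (Sigma A B) = pmf_of_set (\<Union>a\<in>A. {a} \<times> B a)"
    by (simp add: Sigma_def)
  also have "\<dots> = do {a \<leftarrow> pmf_of_set A; pmf_of_set ({a} \<times> B a)}"
    using assms by (intro pmf_of_set_UN) (auto simp: card_cartesian_product disjoint_family_on_def)
  also have "\<dots> = do {a \<leftarrow> pmf_of_set A; b \<leftarrow> pmf_of_set (B a); return_pmf (a, b)}"
  proof (rule bind_pmf_cong[OF refl])
    fix a assume "a \<in> set_pmf (pmf_of_set A)"
    then have "a \<in> A" using assms by simp
    then have "pmf_of_set (Pair a ` B a) = map_pmf (Pair a) (pmf_of_set (B a))"
      using assms by (intro map_pmf_of_set_inj[symmetric]) (auto intro: inj_onI)
    moreover have "{a} \<times> B a = Pair a ` B a" by auto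
    ultimately show "pmf_of_set ({a} \<times> B a) = pmf_of_set (B a) \<bind> (\<lambda>b. return_pmf (a, b))"
      by (simp add: map_pmf_def)
  qed
  finally show ?thesis .
qed

lemma expectation_ACS_law:
  fixes g :: "nat set \<times> nat list \<Rightarrow> real" and n m k :: nat
  assumes "k \<le> n"
  defines "J \<equiv> {(T, p). T \<subseteq> {..<n+m} \<and> card T = m \<and>
                        distinct p \<and> length p = k \<and> set p \<subseteq> {..<n+m} - T}"
  shows "measure_pmf.expectation (ACS_law n m k) g = (\<Sum>x\<in>J. g x) / real (card J)"
proof -
  define \<T> where "\<T> = {T. T \<subseteq> {..<n+m} \<and> card T = m}"
  define \<P> where "\<P> T = {p. distinct p \<and> length p = k \<and> set p \<subseteq> {..<n+m} - T}" for T
  have J: "J = Sigma \<T> \<P>"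
    unfolding J_def \<T>_def \<P>_def by auto
  have card_\<P>: "card (\<P> T) = \<Prod>{n - k + 1..n}" if "T \<in> \<T>" for T
  proof -
    have "card ({..<n+m} - T) = n"
      using that unfolding \<T>_def by (subst card_Diff_subset) (auto intro: finite_subset)
    moreover have "\<P> T = {p. length p = k \<and> distinct p \<and> set p \<subseteq> {..<n+m} - T}"
      unfolding \<P>_def by auto
    ultimately show ?thesis
      using card_lists_distinct_length_eq[of "{..<n+m} - T" k] assms(1) by simp
  qed
  then have \<P>: "finite (\<P> T)" "\<P> T \<noteq> {}" if "T \<in> \<T>" for T
    using that card_gt_0_iff[of "\<P> T"] by (simp_all add: prod_pos)
  have \<T>: "finite \<T>" "\<T> \<noteq> {}"
    unfolding \<T>_def by (auto intro!: exI[of _ "{n..<n+m}"])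
  have "ACS_law n m k = pmf_of_set J"
    using pmf_of_set_Sigma[of \<T> \<P>, OF \<T> \<P> card_\<P>] unfolding J by (simp add: ACS_law_def \<T>_def \<P>_def)
  moreover have "finite J" "J \<noteq> {}"
    unfolding J using \<T> \<P> by auto
  ultimately show ?thesis
    by (simp add: integral_pmf_of_set)
qed

lemma sum_test_sets_Mk_excess_nonpos:
  fixes d :: "nat \<Rightarrow> 'x datum"
  assumes "k \<le> n" and "m \<ge> 1"
    and "distinct p" and "length p = k" and "set p \<subseteq> {..<n+m}"
  shows "(\<Sum>T | T \<subseteq> {..<n+m} - set p \<and> card T = m.
           (Mk n m d T p - real m / (real n - real k + 1)) * indicator A (Tsum n m d T p)) \<le> 0"
proof -
  define U where "U = {..<n+m} - set p"
  define C where "C = {i \<in> U. covered (d i)}"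
  define c where "c = real m / (real n - real k + 1)"
  define \<T> where "\<T> = {T. T \<subseteq> U \<and> card T = m}"
  have U: "finite U" "card U = n + m - k"
    unfolding U_def using assms by (auto simp: card_Diff_subset distinct_card)
  have C: "C \<subseteq> U" "finite C"
    unfolding C_def using U(1) by auto
  have PH_N: "Pk n m T p \<inter> H0 n m d T = T \<inter> C" "Nminus n m d T p = C - T" if "T \<in> \<T>" for T
    using that unfolding \<T>_def Pk_def H0_def Nminus_def Uk_def C_def U_def by auto
  have Tsum: "Tsum n m d T p = card C" if "T \<in> \<T>" for T
    unfolding Tsum_def PH_N[OF that] using card_Int_Diff[OF C(2), of T] by (simp add: Int_commute)
  have "(\<Sum>T\<in>\<T>. real (card (T \<inter> C)) / (1 + real (card (C - T)))) \<le> real (card U choose (m - 1))"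
    unfolding \<T>_def using U(1) C(1) assms(2) by (rule sum_subsets_card_Int_div_card_Diff_le)
  also have "\<dots> = c * real (card \<T>)"
    using assms(1,2) U unfolding \<T>_def n_subsets[OF U(1)] c_def
    by (subst real_binomial_pred) (auto simp: of_nat_diff)
  finally have "(\<Sum>T\<in>\<T>. Mk n m d T p - c) \<le> 0"
    by (simp add: Mk_def PH_N sum_subtractf mult.commute cong: sum.cong)
  then have "indicator A (card C) * (\<Sum>T\<in>\<T>. Mk n m d T p - c) \<le> 0"
    by (simp add: mult_nonneg_nonpos)
  then show ?thesis
    unfolding U_def[symmetric] c_def[symmetric] \<T>_def[symmetric]
    by (simp add: Tsum sum_distrib_left mult.commute cong: sum.cong)
qed

lemma expectation_ACS_law_Mk_excess_nonpos:
  fixes d :: "nat \<Rightarrow> 'x datum"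
  assumes "k \<le> n" and "m \<ge> 1"
  shows "measure_pmf.expectation (ACS_law n m k)
           (\<lambda>(T, p). (Mk n m d T p - real m / (real n - real k + 1)) * indicator A (Tsum n m d T p))
         \<le> 0"
proof -
  define g where "g = (\<lambda>(T, p). (Mk n m d T p - real m / (real n - real k + 1)) * indicator A (Tsum n m d T p))"
  define \<P> where "\<P> = {p. distinct p \<and> length p = k \<and> set p \<subseteq> {..<n+m}}"
  define \<T> where "\<T> p = {T. T \<subseteq> {..<n+m} - set p \<and> card T = m}" for p
  have "finite \<P>"
    unfolding \<P>_def
    by (rule finite_subset[OF _ finite_lists_length_eq[of "{..<n+m}" k]]) auto
  then have "(\<Sum>(T, p) | T \<subseteq> {..<n+m} \<and> card T = m \<and> distinct p \<and> length p = k \<and>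
                       set p \<subseteq> {..<n+m} - T. g (T, p))
           = (\<Sum>p\<in>\<P>. \<Sum>T\<in>\<T> p. g (T, p))"
    by (subst sum.Sigma) (auto simp: \<T>_def \<P>_def
          intro!: sum.reindex_bij_witness[where i="\<lambda>(p, T). (T, p)" and j="\<lambda>(T, p). (p, T)"])
  also have "\<dots> \<le> 0"
  proof (rule sum_nonpos)
    fix p assume "p \<in> \<P>"
    then show "(\<Sum>T\<in>\<T> p. g (T, p)) \<le> 0"
      unfolding \<P>_def \<T>_def g_def using sum_test_sets_Mk_excess_nonpos[OF assms, of p d A] by simp
  qed
  finally show ?thesis
    unfolding g_def[symmetric] expectation_ACS_law[OF assms(1)]
    by (simp add: divide_nonpos_nonneg)
qed

lemma Mk_Tsum_cong_covered:
  assumes "\<forall>i<n+m. covered (d i) = covered (d' i)"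
  shows "Mk n m d T p = Mk n m d' T p" and "Tsum n m d T p = Tsum n m d' T p"
proof -
  have "H0 n m d T = H0 n m d' T" and "Nminus n m d T p = Nminus n m d' T p"
    using assms unfolding H0_def Nminus_def Uk_def by auto
  then show "Mk n m d T p = Mk n m d' T p" and "Tsum n m d T p = Tsum n m d' T p"
    unfolding Mk_def Tsum_def by simp_all
qed

lemma measurable_coverage_function:
  fixes D :: "'w \<Rightarrow> nat \<Rightarrow> 'x datum" and \<Phi> :: "(nat \<Rightarrow> 'x datum) \<Rightarrow> 'y \<Rightarrow> 'b"
  assumes cov: "{z. covered z} \<in> sets S"
    and D: "\<And>i. i < N \<Longrightarrow> (\<lambda>w. D w i) \<in> M \<rightarrow>\<^sub>M S"
    and \<Phi>: "\<And>d d' y. \<forall>i<N. covered (d i) = covered (d' i) \<Longrightarrow> \<Phi> d y = \<Phi> d' y"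
    and "space K = UNIV"
  shows "(\<lambda>(w, y). \<Phi> (D w) y) \<in> M \<Otimes>\<^sub>M measure_pmf L \<rightarrow>\<^sub>M K"
proof -
  define pattern where "pattern w = {i. i < N \<and> covered (D w i)}" for w
  define datum :: "bool \<Rightarrow> 'x datum" where "datum b = (undefined, 0, if b then UNIV else {})" for b
  text \<open>\<Phi> sees D w only through its coverage pattern, which takes finitely many values,
    each of them realised by a data vector built from datum.\<close>
  have \<Phi>_pattern: "\<Phi> (D w) y = \<Phi> (\<lambda>i. datum (i \<in> pattern w)) y" for w y
    by (rule \<Phi>) (simp add: pattern_def datum_def covered_def)
  have covered_D: "Measurable.pred M (\<lambda>w. covered (D w i))" if "i < N" for i
    using measurable_sets[OF D[OF that] cov] by (simp add: pred_def Int_def conj_commute)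
  have "countable (Pow {..<N})"
    by (simp add: countable_finite)
  have pattern: "pattern \<in> M \<rightarrow>\<^sub>M count_space (Pow {..<N})"
    unfolding measurable_count_space_eq_countable[OF \<open>countable (Pow {..<N})\<close>]
  proof (intro conjI ballI)
    show "pattern \<in> space M \<rightarrow> Pow {..<N}"
      unfolding pattern_def by auto
    fix a assume "a \<in> Pow {..<N}"
    then have "pattern -` {a} \<inter> space M = {w \<in> space M. \<forall>i\<in>{..<N}. covered (D w i) = (i \<in> a)}"
      unfolding pattern_def by auto
    also have "\<dots> \<in> sets M"
      using covered_D by measurable
    finally show "pattern -` {a} \<inter> space M \<in> sets M" .
  qed
  have "(\<lambda>z. \<Phi> (\<lambda>i. datum (i \<in> pattern (fst z))) (snd z)) \<in> M \<Otimes>\<^sub>M measure_pmf L \<rightarrow>\<^sub>M K"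
  proof (rule measurable_compose_countable'[where f="\<lambda>C z. \<Phi> (\<lambda>i. datum (i \<in> C)) (snd z)"
        and g="\<lambda>z. pattern (fst z)" and I="Pow {..<N}"])
    show "(\<lambda>z. \<Phi> (\<lambda>i. datum (i \<in> C)) (snd z)) \<in> M \<Otimes>\<^sub>M measure_pmf L \<rightarrow>\<^sub>M K" for C
      by (rule measurable_compose[OF measurable_snd]) (simp add: \<open>space K = UNIV\<close>)
    show "(\<lambda>z. pattern (fst z)) \<in> M \<Otimes>\<^sub>M measure_pmf L \<rightarrow>\<^sub>M count_space (Pow {..<N})"
      by (rule measurable_compose[OF measurable_fst pattern])
  qed fact
  then show ?thesis
    by (simp add: \<Phi>_pattern split_beta)
qed

lemma abs_Mk_le: "\<bar>Mk n m d T p\<bar> \<le> real (n + m)"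
proof -
  have "\<bar>Mk n m d T p\<bar> \<le> real (card (Pk n m T p \<inter> H0 n m d T))"
    unfolding Mk_def by (simp add: divide_le_eq algebra_simps)
  also have "card (Pk n m T p \<inter> H0 n m d T) \<le> n + m"
    using card_mono[of "{..<n+m}" "Pk n m T p \<inter> H0 n m d T"] unfolding Pk_def Uk_def by auto
  finally show ?thesis
    by simp
qed

lemma (in finite_measure_subalgebra) real_cond_exp_le_const:
  fixes f :: "'a \<Rightarrow> real"
  assumes f: "integrable M f"
    and le: "\<And>A. A \<in> sets F \<Longrightarrow> (\<integral>x. (f x - c) * indicator A x \<partial>M) \<le> 0"
  shows "AE x in M. real_cond_exp M F f x \<le> c"
proof -
  define g where "g = real_cond_exp M F f"
  define A where "A = {x \<in> space F. c < g x}"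
  have "g \<in> borel_measurable F"
    unfolding g_def by (rule borel_measurable_cond_exp)
  then have A_F: "A \<in> sets F"
    unfolding A_def by measurable
  then have A_M: "A \<in> sets M"
    using subalg by (auto simp: subalgebra_def)
  have g: "integrable M g"
    unfolding g_def using f by (rule real_cond_exp_int(1))
  have c: "integrable M (\<lambda>x. c * indicator A x)"
    using A_M by (intro integrable_mult_right integrable_real_indicator) (simp_all add: less_top[symmetric])
  have gcA: "integrable M (\<lambda>x. (g x - c) * indicator A x)"
    using Bochner_Integration.integrable_diff[OF integrable_mult_indicator[OF A_M g] c]
    by (simp add: algebra_simps)
  have "(\<integral>x. (g x - c) * indicator A x \<partial>M) = (\<integral>x. indicator A x * g x \<partial>M) - (\<integral>x. c * indicator A x \<partial>M)"
    using Bochner_Integration.integral_diff[OF integrable_mult_indicator[OF A_M g] c] by (simp add: algebra_simps)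
  also have "(\<integral>x. indicator A x * g x \<partial>M) = (\<integral>x. indicator A x * f x \<partial>M)"
    using real_cond_exp_intA[OF f A_F] unfolding set_lebesgue_integral_def g_def by simp
  also have "\<dots> - (\<integral>x. c * indicator A x \<partial>M) = (\<integral>x. (f x - c) * indicator A x \<partial>M)"
    using Bochner_Integration.integral_diff[OF integrable_mult_indicator[OF A_M f] c] by (simp add: algebra_simps)
  also have "\<dots> \<le> 0"
    using le[OF A_F] .
  finally have "(\<integral>x. (g x - c) * indicator A x \<partial>M) \<le> 0" .
  moreover have nonneg: "AE x in M. 0 \<le> (g x - c) * indicator A x"
    by (rule AE_I2) (simp add: A_def indicator_def)
  ultimately have "AE x in M. (g x - c) * indicator A x = 0"
    using integral_nonneg_AE[OF nonneg] integral_nonneg_eq_0_iff_AE[OF gcA nonneg] by simp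
  with AE_space show ?thesis
    by eventually_elim (use subalg in \<open>auto simp: A_def g_def subalgebra_def indicator_def\<close>)
qed

lemma real_cond_exp_vimage_le_const:
  fixes f :: "'a \<Rightarrow> real" and t :: "'a \<Rightarrow> 'b"
  assumes "finite_measure M" and f: "integrable M f" and t: "t \<in> M \<rightarrow>\<^sub>M N"
    and le: "\<And>B. B \<in> sets N \<Longrightarrow> (\<integral>x. (f x - c) * indicator B (t x) \<partial>M) \<le> 0"
  shows "AE x in M. real_cond_exp M (vimage_algebra (space M) t N) f x \<le> c"
proof -
  define F where "F = vimage_algebra (space M) t N"
  have sets_F: "sets F = {t -` B \<inter> space M | B. B \<in> sets N}"
    unfolding F_def using measurable_space[OF t] by (intro sets_vimage_algebra2) auto
  have "subalgebra M F"
    unfolding subalgebra_def F_def using measurable_sets[OF t] sets_F[unfolded F_def] by auto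
  with \<open>finite_measure M\<close> interpret finite_measure_subalgebra M F
    by (simp add: finite_measure_subalgebra_def finite_measure_subalgebra_axioms_def)
  have "AE x in M. real_cond_exp M F f x \<le> c"
  proof (rule real_cond_exp_le_const[OF f])
    fix A assume "A \<in> sets F"
    then obtain B where B: "B \<in> sets N" "A = t -` B \<inter> space M"
      using sets_F by auto
    have "(\<integral>x. (f x - c) * indicator A x \<partial>M) = (\<integral>x. (f x - c) * indicator B (t x) \<partial>M)"
      by (rule Bochner_Integration.integral_cong) (auto simp: B indicator_def)
    then show "(\<integral>x. (f x - c) * indicator A x \<partial>M) \<le> 0"
      using le[OF B(1)] by simp
  qed
  then show ?thesis
    unfolding F_def .
qed

lemma (in pair_sigma_finite) integral_nonpos_if_sections_nonpos:
  fixes f :: "'a \<times> 'b \<Rightarrow> real"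
  assumes "integrable (M1 \<Otimes>\<^sub>M M2) f" and "\<And>x. x \<in> space M1 \<Longrightarrow> (\<integral>y. f (x, y) \<partial>M2) \<le> 0"
  shows "(\<integral>z. f z \<partial>(M1 \<Otimes>\<^sub>M M2)) \<le> 0"
proof -
  have "0 \<le> (\<integral>x. - (\<integral>y. f (x, y) \<partial>M2) \<partial>M1)"
    using assms(2) by (intro integral_nonneg_AE AE_I2) simp
  then show ?thesis
    using integral_fst'[OF assms(1)] by simp
qed

theorem mainTheorem4:
  fixes M :: "'w measure" and S :: "'x datum measure"
    and D :: "'w \<Rightarrow> nat \<Rightarrow> 'x datum" and n m k :: nat
  assumes "prob_space M"
    and "n \<ge> 1" and "m \<ge> 1" and "k \<le> n"
    and "{z. covered z} \<in> sets S"
    and "\<And>i. i < n + m \<Longrightarrow> (\<lambda>w. D w i) \<in> M \<rightarrow>\<^sub>M S"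
    and "exchangeable M S (n + m) D"
  defines "\<Omega> \<equiv> M \<Otimes>\<^sub>M measure_pmf (ACS_law n m k)"
  shows "(AE \<omega> in \<Omega>.
            real_cond_exp \<Omega>
              (vimage_algebra (space \<Omega>) (\<lambda>(w, T, p). Tsum n m (D w) T p) (count_space UNIV))
              (\<lambda>(w, T, p). Mk n m (D w) T p) \<omega>
            \<le> real m / (real n - real k + 1))
       \<and> (\<integral>\<omega>. (\<lambda>(w, T, p). Mk n m (D w) T p) \<omega> \<partial>\<Omega>) \<le> real m / (real n - real k + 1)"
proof -
  define c where "c = real m / (real n - real k + 1)"
  define f where "f = (\<lambda>(w, T, p). Mk n m (D w) T p)"
  define t where "t = (\<lambda>(w, T, p). Tsum n m (D w) T p)"
  interpret pair_prob_space M "measure_pmf (ACS_law n m k)"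
    by (intro pair_prob_space.intro pair_sigma_finite.intro prob_space_imp_sigma_finite
        assms(1) measure_pmf.prob_space_axioms)
  have [measurable]: "f \<in> borel_measurable \<Omega>" "t \<in> \<Omega> \<rightarrow>\<^sub>M count_space UNIV"
    unfolding \<Omega>_def f_def t_def
    using measurable_coverage_function[OF assms(5,6), where \<Phi>="\<lambda>d (T, p). Mk n m d T p"]
      measurable_coverage_function[OF assms(5,6), where \<Phi>="\<lambda>d (T, p). Tsum n m d T p"]
    by (simp_all add: Mk_Tsum_cong_covered split_beta)
  interpret \<Omega>: prob_space \<Omega>
    unfolding \<Omega>_def by (rule P.prob_space_axioms)
  have bounded: "\<bar>(f \<omega> - c) * indicator B (t \<omega>)\<bar> \<le> real (n + m) + \<bar>c\<bar>" for \<omega> B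
  proof -
    have "\<bar>f \<omega>\<bar> \<le> real (n + m)"
      using abs_Mk_le by (simp add: f_def split_beta)
    then show ?thesis
      using abs_triangle_ineq4[of "f \<omega>" c] by (simp add: indicator_def)
  qed
  have integrable_excess: "integrable \<Omega> (\<lambda>\<omega>. (f \<omega> - c) * indicator B (t \<omega>))" for B
    using bounded by (intro \<Omega>.integrable_const_bound[where B="real (n + m) + \<bar>c\<bar>"] AE_I2) simp_all
  have excess_nonpos: "(\<integral>\<omega>. (f \<omega> - c) * indicator B (t \<omega>) \<partial>\<Omega>) \<le> 0" for B
    using integrable_excess unfolding \<Omega>_def
  proof (rule integral_nonpos_if_sections_nonpos)
    show "(\<integral>y. (f (w, y) - c) * indicator B (t (w, y)) \<partial>ACS_law n m k) \<le> 0" for w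
      using expectation_ACS_law_Mk_excess_nonpos[OF assms(4,3), of "D w" B]
      by (simp add: f_def t_def c_def case_prod_beta')
  qed
  have "integrable \<Omega> f"
    using Bochner_Integration.integrable_add[OF integrable_excess[of UNIV] \<Omega>.integrable_const[of c]] by simp
  then have "AE \<omega> in \<Omega>. real_cond_exp \<Omega> (vimage_algebra (space \<Omega>) t (count_space UNIV)) f \<omega> \<le> c"
    using excess_nonpos by (intro real_cond_exp_vimage_le_const) (auto simp: \<Omega>.finite_measure_axioms)
  moreover have "(\<integral>\<omega>. f \<omega> \<partial>\<Omega>) \<le> c"
    using excess_nonpos[of UNIV] \<open>integrable \<Omega> f\<close> by (simp add: \<Omega>.prob_space)
  ultimately show ?thesis
    unfolding c_def f_def t_def by blast
qed

end
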